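(* There is a constant $C<\infty$ such that for all $n\ge1$ and all $f:\{0,1\}^n\to\mathbb{R}$, $\|R_0f\|_2\le C\|f\|_2$ and $\|R_1f\|_2\le C\|f\|_2$, where $(R_0f)(x)=\Big(\frac12\sum_{k=1}^{r_0}k\,[((S_{2k}-S_{2(k-1)})f)(x)]^2\Big)^{1/2}$ with $r_0=\lfloor\lfloor n/2\rfloor/2\rfloor$, and $(R_1f)(x)=\Big(\frac12\sum_{k=1}^{r_1}k\,[((S_{2k+1}-S_{2k-1})f)(x)]^2\Big)^{1/2}$ with $r_1=\lfloor(\lfloor n/2\rfloor-1)/2\rfloor$.
   Context: Let $\mathbb{I}^n=\{0,1\}^n$ with Hamming distance $d$, and $\|f\|_2=(\sum_x f(x)^2)^{1/2}$. For $0\le k\le n$, the spherical mean is $(S_kf)(x)=\binom nk^{-1}\sum_{y:\,d(x,y)=k}f(y)$. *)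

theory Defs
  imports "HOL-Analysis.Analysis"
begin

text \<open>The discrete cube {0,1}^n is represented by the subsets of {..<n}
  (a point is identified with its support). Hamming distance is the
  cardinality of the symmetric difference.\<close>

definition cube :: "nat \<Rightarrow> nat set set" where
  "cube n = Pow {..<n}"

definition hamming :: "nat set \<Rightarrow> nat set \<Rightarrow> nat" where
  "hamming x y = card ((x - y) \<union> (y - x))"

definition l2norm :: "nat \<Rightarrow> (nat set \<Rightarrow> real) \<Rightarrow> real" where
  "l2norm n f = sqrt (\<Sum>x\<in>cube n. (f x)^2)"

definition sph_mean :: "nat \<Rightarrow> nat \<Rightarrow> (nat set \<Rightarrow> real) \<Rightarrow> nat set \<Rightarrow> real" where
  "sph_mean n k f x = (\<Sum>y\<in>{y\<in>cube n. hamming x y = k}. f y) / real (n choose k)"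

definition R0 :: "nat \<Rightarrow> (nat set \<Rightarrow> real) \<Rightarrow> nat set \<Rightarrow> real" where
  "R0 n f x = sqrt ((1/2) * (\<Sum>k=1..(n div 2) div 2.
      real k * (sph_mean n (2*k) f x - sph_mean n (2*(k-1)) f x)^2))"

definition R1 :: "nat \<Rightarrow> (nat set \<Rightarrow> real) \<Rightarrow> nat set \<Rightarrow> real" where
  "R1 n f x = sqrt ((1/2) * (\<Sum>k=1..(n div 2 - 1) div 2.
      real k * (sph_mean n (2*k+1) f x - sph_mean n (2*k-1) f x)^2))"

end

theory Submission
  imports Defs
begin

text \<open>
  Both square functions are diagonalised by the Walsh characters
  \<open>walsh T x = (-1)^|T \<inter> x|\<close>: the spherical mean \<open>S\<^sub>k\<close> acts on \<open>walsh T\<close> as multiplication by the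
  normalised Krawtchouk value \<open>\<kappa>\<^sub>k = K\<^sub>k(|T|) / (n choose k)\<close>. By Parseval it therefore
  suffices to bound \<open>\<Sum>\<^sub>m m (\<kappa>\<^sub>m\<^sub>+\<^sub>1 - \<kappa>\<^sub>m\<^sub>-\<^sub>1)\<^sup>2\<close> for \<open>2m + 2 \<le> n\<close>, uniformly in \<open>n\<close> and \<open>|T| = j\<close>.
  The \<open>\<kappa>\<^sub>k\<close> satisfy the three-term recurrence
  \<open>(n - k) \<kappa>\<^sub>k\<^sub>+\<^sub>1 + k \<kappa>\<^sub>k\<^sub>-\<^sub>1 = (n - 2j) \<kappa>\<^sub>k\<close>, and so do the second differences
  \<open>e\<^sub>m = \<kappa>\<^sub>m\<^sub>+\<^sub>2 - \<kappa>\<^sub>m\<close> with \<open>n - 2\<close> in place of \<open>n\<close>. For such a sequence with \<open>\<mu> = (n - 2j)/(n - 2)\<close>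
  the energy \<open>e\<^sub>m\<^sup>2 + e\<^sub>m\<^sub>+\<^sub>1\<^sup>2 - 2\<mu> e\<^sub>m e\<^sub>m\<^sub>+\<^sub>1\<close> decreases in the first half of the range and in
  the first quarter even contracts by a factor depending on \<open>1 - |\<mu>|\<close>; this bounds
  \<open>\<Sum> (m+1) e\<^sub>m\<^sup>2\<close> by \<open>e\<^sub>0\<^sup>2 / (1 - |\<mu>|)\<^sup>2\<close>, and \<open>e\<^sub>0 = \<kappa>\<^sub>2 - 1\<close> is small exactly when \<open>|\<mu>|\<close> is close to 1.
\<close>

section \<open>Walsh analysis on the cube\<close>

definition walsh :: "nat set \<Rightarrow> nat set \<Rightarrow> real" where
  "walsh T x = (-1) ^ card (T \<inter> x)"

definition layer :: "nat \<Rightarrow> nat \<Rightarrow> nat set set" where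
  "layer n k = {A \<in> cube n. card A = k}"

definition walsh_coeff :: "nat \<Rightarrow> (nat set \<Rightarrow> real) \<Rightarrow> nat set \<Rightarrow> real" where
  "walsh_coeff n f T = (\<Sum>y\<in>cube n. f y * walsh T y) / 2 ^ n"

lemma finite_cube [simp]: "finite (cube n)"
  unfolding cube_def by simp

lemma card_cube: "card (cube n) = 2 ^ n"
  unfolding cube_def by (simp add: card_Pow)

lemma finite_layer [simp]: "finite (layer n k)"
  unfolding layer_def by simp

lemma finite_of_mem_cube: "x \<in> cube n \<Longrightarrow> finite x"
  unfolding cube_def by (auto intro: finite_subset)

lemma layer_0: "layer n 0 = {{}}"
  unfolding layer_def cube_def by (auto intro: finite_subset simp: card_eq_0_iff)

lemma sym_diff_mem_cube: "x \<in> cube n \<Longrightarrow> A \<in> cube n \<Longrightarrow> sym_diff x A \<in> cube n"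
  unfolding cube_def by auto

lemma sym_diff_cancel [simp]: "sym_diff (sym_diff x A) A = x" "sym_diff x (sym_diff x A) = A"
  by auto

lemma card_sym_diff:
  assumes "finite X" "finite Y"
  shows "card (sym_diff X Y) + 2 * card (X \<inter> Y) = card X + card Y"
proof -
  have "card (sym_diff X Y) = card (X - Y) + card (Y - X)"
    using assms by (subst card_Un_disjoint) auto
  moreover have "card (X - Y) + card (X \<inter> Y) = card X" "card (Y - X) + card (X \<inter> Y) = card Y"
    using assms card_Diff_subset_Int[of X Y] card_Diff_subset_Int[of Y X]
      card_mono[of X "X \<inter> Y"] card_mono[of Y "X \<inter> Y"] by (auto simp: Int_commute)
  ultimately show ?thesis by simp
qed

lemma walsh_commute: "walsh T x = walsh x T"
  unfolding walsh_def by (simp add: Int_commute)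

lemma walsh_sym_diff:
  assumes "finite x" "finite A"
  shows "walsh T (sym_diff x A) = walsh T x * walsh T A"
proof -
  have "T \<inter> sym_diff x A = sym_diff (T \<inter> x) (T \<inter> A)" by auto
  moreover have "card (sym_diff (T \<inter> x) (T \<inter> A)) + 2 * card (T \<inter> x \<inter> (T \<inter> A))
      = card (T \<inter> x) + card (T \<inter> A)"
    using assms by (intro card_sym_diff) auto
  ultimately show ?thesis
    unfolding walsh_def by (metis (no_types) power_add power_mult neg_one_even_power even_mult_iff
        even_numeral mult_1_right)
qed

lemma walsh_mult_walsh:
  assumes "finite T" "finite U"
  shows "walsh T x * walsh U x = walsh (sym_diff T U) x"
  using walsh_sym_diff[OF assms, of x] walsh_commute by metis

lemma sum_walsh:
  assumes "V \<subseteq> {..<n}"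
  shows "(\<Sum>x\<in>cube n. walsh V x) = (if V = {} then 2 ^ n else 0)"
proof (cases "V = {}")
  case True
  then show ?thesis unfolding walsh_def by (simp add: card_cube)
next
  case False
  then obtain v where v: "v \<in> V" by auto
  have "{v} \<in> cube n" using v assms unfolding cube_def by auto
  moreover have "walsh V {v} = -1" using v unfolding walsh_def by simp
  \<comment> \<open>flipping the coordinate \<open>v\<close> is a bijection of the cube that changes the sign of \<open>walsh V\<close>\<close>
  ultimately have "(\<Sum>x\<in>cube n. walsh V x) = (\<Sum>x\<in>cube n. walsh V (sym_diff x {v}))"
    by (intro sum.reindex_bij_witness[where i="\<lambda>x. sym_diff x {v}" and j="\<lambda>x. sym_diff x {v}"])
      (auto simp: sym_diff_mem_cube)
  also have "\<dots> = (\<Sum>x\<in>cube n. - walsh V x)"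
    using \<open>walsh V {v} = -1\<close> by (intro sum.cong) (auto simp: walsh_sym_diff finite_of_mem_cube)
  finally show ?thesis using False by (simp add: sum_negf)
qed

lemma walsh_orthogonal:
  assumes "T \<in> cube n" "U \<in> cube n"
  shows "(\<Sum>x\<in>cube n. walsh T x * walsh U x) = (if T = U then 2 ^ n else 0)"
proof -
  have "(\<Sum>x\<in>cube n. walsh T x * walsh U x) = (\<Sum>x\<in>cube n. walsh (sym_diff T U) x)"
    using assms by (simp add: walsh_mult_walsh finite_of_mem_cube)
  also have "\<dots> = (if sym_diff T U = {} then 2 ^ n else 0)"
    using assms by (intro sum_walsh) (auto simp: cube_def)
  finally show ?thesis by (auto simp: Diff_eq_empty_iff)
qed

lemma walsh_expansion:
  assumes x: "x \<in> cube n"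
  shows "f x = (\<Sum>T\<in>cube n. walsh_coeff n f T * walsh T x)"
proof -
  have "(\<Sum>T\<in>cube n. (\<Sum>y\<in>cube n. f y * walsh T y) * walsh T x)
      = (\<Sum>T\<in>cube n. \<Sum>y\<in>cube n. f y * (walsh T y * walsh T x))"
    by (simp add: sum_distrib_right sum_distrib_left mult_ac)
  also have "\<dots> = (\<Sum>y\<in>cube n. f y * (\<Sum>T\<in>cube n. walsh y T * walsh x T))"
    by (subst sum.swap) (simp add: sum_distrib_left walsh_commute)
  also have "\<dots> = (\<Sum>y\<in>cube n. if y = x then f y * 2 ^ n else 0)"
    using x by (intro sum.cong) (auto simp: walsh_orthogonal)
  also have "\<dots> = 2 ^ n * f x"
    using x by (simp add: sum.delta')
  finally show ?thesis
    unfolding walsh_coeff_def by (simp add: sum_divide_distrib[symmetric])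
qed

lemma walsh_parseval:
  "(\<Sum>x\<in>cube n. (\<Sum>T\<in>cube n. a T * walsh T x)^2) = 2 ^ n * (\<Sum>T\<in>cube n. (a T)^2)"
proof -
  have "(\<Sum>x\<in>cube n. (\<Sum>T\<in>cube n. a T * walsh T x)^2)
      = (\<Sum>x\<in>cube n. \<Sum>T\<in>cube n. \<Sum>U\<in>cube n. a T * a U * (walsh T x * walsh U x))"
    by (simp add: power2_eq_square sum_product mult_ac)
  also have "\<dots> = (\<Sum>T\<in>cube n. \<Sum>U\<in>cube n. \<Sum>x\<in>cube n. a T * a U * (walsh T x * walsh U x))"
    by (subst sum.swap) (subst (2) sum.swap, rule refl)
  also have "\<dots> = (\<Sum>T\<in>cube n. \<Sum>U\<in>cube n. if U = T then a T * a T * 2 ^ n else 0)"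
    by (intro sum.cong refl) (auto simp: walsh_orthogonal simp flip: sum_distrib_left)
  also have "\<dots> = 2 ^ n * (\<Sum>T\<in>cube n. (a T)^2)"
    by (simp add: sum.delta' sum_distrib_left power2_eq_square mult_ac)
  finally show ?thesis .
qed

lemma sum_square_eq_walsh_coeff:
  "(\<Sum>x\<in>cube n. (f x)^2) = 2 ^ n * (\<Sum>T\<in>cube n. (walsh_coeff n f T)^2)"
  by (subst walsh_parseval[symmetric]) (auto intro!: sum.cong simp: walsh_expansion[symmetric])

section \<open>Spherical means as Fourier multipliers\<close>

definition krawtchouk :: "nat \<Rightarrow> nat set \<Rightarrow> nat \<Rightarrow> real" where
  "krawtchouk n T k = (\<Sum>A\<in>layer n k. walsh T A)"

definition sph_eigenvalue :: "nat \<Rightarrow> nat set \<Rightarrow> nat \<Rightarrow> real" where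
  "sph_eigenvalue n T k = krawtchouk n T k / real (n choose k)"

lemma sph_mean_eq_layer_sum:
  assumes x: "x \<in> cube n"
  shows "sph_mean n k f x = (\<Sum>A\<in>layer n k. f (sym_diff x A)) / real (n choose k)"
proof -
  have "(\<Sum>y\<in>{y\<in>cube n. hamming x y = k}. f y) = (\<Sum>A\<in>layer n k. f (sym_diff x A))"
    using x unfolding layer_def hamming_def
    by (intro sum.reindex_bij_witness[where i="sym_diff x" and j="sym_diff x"])
      (auto simp: sym_diff_mem_cube)
  then show ?thesis unfolding sph_mean_def by simp
qed

lemma sph_mean_walsh_expansion:
  assumes x: "x \<in> cube n"
  shows "sph_mean n k f x = (\<Sum>T\<in>cube n. walsh_coeff n f T * sph_eigenvalue n T k * walsh T x)"
proof -
  have "(\<Sum>A\<in>layer n k. f (sym_diff x A))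
      = (\<Sum>A\<in>layer n k. \<Sum>T\<in>cube n. walsh_coeff n f T * (walsh T x * walsh T A))"
  proof (intro sum.cong refl)
    fix A assume "A \<in> layer n k"
    then have A: "A \<in> cube n" unfolding layer_def by simp
    show "f (sym_diff x A) = (\<Sum>T\<in>cube n. walsh_coeff n f T * (walsh T x * walsh T A))"
      using walsh_expansion[OF sym_diff_mem_cube[OF x A], of f] x A
      by (simp add: walsh_sym_diff finite_of_mem_cube)
  qed
  also have "\<dots> = (\<Sum>T\<in>cube n. walsh_coeff n f T * krawtchouk n T k * walsh T x)"
    unfolding krawtchouk_def
    by (subst sum.swap) (simp add: sum_distrib_left sum_distrib_right mult_ac)
  finally show ?thesis
    unfolding sph_mean_eq_layer_sum[OF x] sph_eigenvalue_def
    by (simp add: sum_divide_distrib)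
qed

lemma sum_square_sph_mean_diff:
  "(\<Sum>x\<in>cube n. (sph_mean n p f x - sph_mean n q f x)^2)
    = 2 ^ n * (\<Sum>T\<in>cube n. (walsh_coeff n f T)^2 * (sph_eigenvalue n T p - sph_eigenvalue n T q)^2)"
proof -
  have "sph_mean n p f x - sph_mean n q f x
      = (\<Sum>T\<in>cube n. walsh_coeff n f T * (sph_eigenvalue n T p - sph_eigenvalue n T q) * walsh T x)"
    if "x \<in> cube n" for x
    by (simp add: sph_mean_walsh_expansion[OF that] algebra_simps flip: sum_subtractf)
  then show ?thesis
    by (simp add: walsh_parseval power_mult_distrib cong: sum.cong)
qed

section \<open>The Krawtchouk recurrence\<close>

lemma sum_walsh_singleton:
  assumes "T \<subseteq> {..<n}"
  shows "(\<Sum>i<n. walsh T {i}) = real n - 2 * real (card T)"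
proof -
  have "(\<Sum>i<n. walsh T {i}) = (\<Sum>i<n. 1 - 2 * (if i \<in> T then 1 else 0))"
    unfolding walsh_def by (intro sum.cong) auto
  also have "\<dots> = real n - 2 * real (card ({..<n} \<inter> T))"
    by (simp add: sum_subtractf sum.If_cases flip: sum_distrib_left)
  finally show ?thesis using assms by (simp add: Int_absorb1)
qed

lemma card_le_of_mem_layer: "A \<in> layer n k \<Longrightarrow> k \<le> n"
  unfolding layer_def cube_def by (metis (mono_tags) PowD card_lessThan card_mono finite_lessThan mem_Collect_eq)

lemma sum_layer_insert_eq:
  "(\<Sum>A\<in>layer n k. \<Sum>i\<in>{..<n} - A. G A (insert i A)) = (\<Sum>B\<in>layer n (Suc k). \<Sum>i\<in>B. G (B - {i}) B)"
proof -
  have "(\<Sum>A\<in>layer n k. \<Sum>i\<in>{..<n} - A. G A (insert i A))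
      = (\<Sum>(A, i)\<in>Sigma (layer n k) (\<lambda>A. {..<n} - A). G A (insert i A))"
    by (rule sum.Sigma) auto
  also have "\<dots> = (\<Sum>(B, i)\<in>Sigma (layer n (Suc k)) (\<lambda>B. B). G (B - {i}) B)"
    by (rule sum.reindex_bij_witness[where i="\<lambda>(B, i). (B - {i}, i)" and j="\<lambda>(A, i). (insert i A, i)"])
      (auto simp: layer_def cube_def insert_absorb card_insert_if finite_subset)
  also have "\<dots> = (\<Sum>B\<in>layer n (Suc k). \<Sum>i\<in>B. G (B - {i}) B)"
    by (rule sum.Sigma[symmetric]) (auto simp: layer_def finite_of_mem_cube)
  finally show ?thesis .
qed

lemma sum_layer_insert:
  "(\<Sum>A\<in>layer n k. \<Sum>i\<in>{..<n} - A. walsh T (insert i A)) = real (Suc k) * krawtchouk n T (Suc k)"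
proof -
  have "(\<Sum>B\<in>layer n (Suc k). \<Sum>i\<in>B. walsh T B) = (\<Sum>B\<in>layer n (Suc k). real (Suc k) * walsh T B)"
    by (intro sum.cong) (auto simp: layer_def)
  then show ?thesis
    unfolding sum_layer_insert_eq[where G="\<lambda>A B. walsh T B"] krawtchouk_def
    by (simp add: sum_distrib_left)
qed

lemma sum_layer_remove:
  "(\<Sum>A\<in>layer n (Suc k). \<Sum>i\<in>A. walsh T (A - {i})) = (real n - real k) * krawtchouk n T k"
proof -
  have "(\<Sum>i\<in>{..<n} - A. walsh T A) = (real n - real k) * walsh T A" if "A \<in> layer n k" for A
  proof -
    have "card ({..<n} - A) = n - k"
      using that unfolding layer_def cube_def by (auto simp: card_Diff_subset finite_subset)
    then show ?thesis using card_le_of_mem_layer[OF that] by (simp add: of_nat_diff)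
  qed
  then have "(\<Sum>A\<in>layer n k. \<Sum>i\<in>{..<n} - A. walsh T A) = (real n - real k) * krawtchouk n T k"
    unfolding krawtchouk_def sum_distrib_left by (intro sum.cong) auto
  then show ?thesis
    by (simp only: sum_layer_insert_eq[where G="\<lambda>A B. walsh T A"])
qed

\<comment> \<open>Count \<open>\<Sum>\<^sub>A\<^sub>,\<^sub>i walsh T (A \<triangle> {i})\<close> over \<open>|A| = k\<close> in two ways: by multiplicativity, and by
  splitting according to whether the flip adds or removes \<open>i\<close>.\<close>
lemma krawtchouk_flip_sum:
  assumes T: "T \<subseteq> {..<n}"
  shows "(\<Sum>A\<in>layer n k. \<Sum>i\<in>{..<n} - A. walsh T (insert i A)) + (\<Sum>A\<in>layer n k. \<Sum>i\<in>A. walsh T (A - {i}))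
    = (real n - 2 * real (card T)) * krawtchouk n T k"
proof -
  have "(\<Sum>i\<in>{..<n} - A. walsh T (insert i A)) + (\<Sum>i\<in>A. walsh T (A - {i}))
      = walsh T A * (\<Sum>i<n. walsh T {i})" if "A \<in> layer n k" for A
  proof -
    have A: "A \<subseteq> {..<n}" "finite A" using that unfolding layer_def cube_def by (auto intro: finite_subset)
    have "walsh T A * (\<Sum>i<n. walsh T {i}) = (\<Sum>i\<in>({..<n} - A) \<union> A. walsh T (sym_diff A {i}))"
      using A by (simp add: sum_distrib_left walsh_sym_diff Un_absorb2)
    also have "\<dots> = (\<Sum>i\<in>{..<n} - A. walsh T (sym_diff A {i})) + (\<Sum>i\<in>A. walsh T (sym_diff A {i}))"
      using A by (intro sum.union_disjoint) auto
    also have "\<dots> = (\<Sum>i\<in>{..<n} - A. walsh T (insert i A)) + (\<Sum>i\<in>A. walsh T (A - {i}))"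
      by (intro arg_cong2[where f="(+)"] sum.cong refl arg_cong[where f="walsh T"]) auto
    finally show ?thesis by simp
  qed
  then show ?thesis
    unfolding krawtchouk_def sum_walsh_singleton[OF T]
    by (simp add: sum_distrib_right mult.commute flip: sum.distrib cong: sum.cong)
qed

lemma krawtchouk_0: "krawtchouk n T 0 = 1"
  unfolding krawtchouk_def layer_0 walsh_def by simp

lemma krawtchouk_1: "T \<subseteq> {..<n} \<Longrightarrow> krawtchouk n T 1 = real n - 2 * real (card T)"
  using krawtchouk_flip_sum[where k=0] sum_layer_insert[where k=0]
  by (simp add: layer_0 krawtchouk_0)

lemma krawtchouk_recurrence:
  "T \<subseteq> {..<n} \<Longrightarrow> real (Suc (Suc k)) * krawtchouk n T (Suc (Suc k)) + (real n - real k) * krawtchouk n T k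
    = (real n - 2 * real (card T)) * krawtchouk n T (Suc k)"
  using krawtchouk_flip_sum[where k="Suc k"] sum_layer_insert[where k="Suc k"] sum_layer_remove[where k=k]
  by simp

lemma Suc_mult_choose_Suc_real:
  "k \<le> n \<Longrightarrow> real (Suc k) * real (n choose Suc k) = (real n - real k) * real (n choose k)"
proof (cases n)
  case (Suc m)
  assume "k \<le> n"
  have "Suc k * (n choose Suc k) = (n - k) * (n choose k)"
    using Suc Suc_times_binomial binomial_absorb_comp[of n k] by simp
  then show ?thesis
    using \<open>k \<le> n\<close> by (metis of_nat_diff of_nat_mult)
qed simp

lemma krawtchouk_eq_sph_eigenvalue: "krawtchouk n T k = real (n choose k) * sph_eigenvalue n T k"
proof (cases "k \<le> n")
  case False
  then have "layer n k = {}" using card_le_of_mem_layer by fastforce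
  then show ?thesis unfolding sph_eigenvalue_def krawtchouk_def by simp
qed (simp add: sph_eigenvalue_def)

lemma sph_eigenvalue_0: "sph_eigenvalue n T 0 = 1"
  unfolding sph_eigenvalue_def krawtchouk_0 by simp

lemma sph_eigenvalue_1:
  assumes "T \<subseteq> {..<n}"
  shows "sph_eigenvalue n T 1 = (real n - 2 * real (card T)) / real n"
  using krawtchouk_1[OF assms] unfolding sph_eigenvalue_def by simp

lemma sph_eigenvalue_recurrence:
  assumes T: "T \<subseteq> {..<n}" and k: "1 \<le> k" "k < n"
  shows "(real n - real k) * sph_eigenvalue n T (Suc k) + real k * sph_eigenvalue n T (k - 1)
    = (real n - 2 * real (card T)) * sph_eigenvalue n T k"
proof -
  obtain j where j: "k = Suc j" using k by (cases k) auto
  define c where "c i = real (n choose i)" for i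
  define \<kappa> where "\<kappa> = sph_eigenvalue n T"
  have b: "real (Suc (Suc j)) * c (Suc (Suc j)) = (real n - real (Suc j)) * c (Suc j)"
    "(real n - real j) * c j = real (Suc j) * c (Suc j)"
    using Suc_mult_choose_Suc_real[of "Suc j" n] Suc_mult_choose_Suc_real[of j n] k j
    unfolding c_def by simp_all
  have "c (Suc j) * ((real n - real (Suc j)) * \<kappa> (Suc (Suc j)) + real (Suc j) * \<kappa> j)
      = (real (Suc (Suc j)) * c (Suc (Suc j))) * \<kappa> (Suc (Suc j)) + ((real n - real j) * c j) * \<kappa> j"
    unfolding b by (simp only: algebra_simps)
  also have "\<dots> = c (Suc j) * ((real n - 2 * real (card T)) * \<kappa> (Suc j))"
    using krawtchouk_recurrence[OF T, of j]
    unfolding c_def \<kappa>_def krawtchouk_eq_sph_eigenvalue by (simp only: mult_ac)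
  finally show ?thesis
    using k unfolding j \<kappa>_def c_def by simp
qed

section \<open>Sequences with a contracting energy\<close>

lemma telescoping_contraction_sum_le:
  fixes F :: "nat \<Rightarrow> real"
  assumes "\<And>m. 1 \<le> m \<Longrightarrow> m \<le> T \<Longrightarrow> \<delta> * F m \<le> F (m - 1) - F (Suc m)"
  shows "\<delta> * (\<Sum>m=1..T. F m) \<le> F 0 + F 1 - F T - F (Suc T)"
  using assms
proof (induction T)
  case (Suc T)
  then show ?case
    using Suc.prems[of "Suc T"] by (simp add: algebra_simps)
qed simp

lemma telescoping_contraction_weighted_sum_le:
  fixes F :: "nat \<Rightarrow> real"
  assumes "\<And>m. 1 \<le> m \<Longrightarrow> m \<le> T \<Longrightarrow> \<delta> * F m \<le> F (m - 1) - F (Suc m)"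
  shows "\<delta> * (\<Sum>m=1..T. real m * F m)
    \<le> 2 * (\<Sum>i<T. F i) - F 0 - (real T - 1) * F T - real T * F (Suc T)"
  using assms
proof (induction T)
  case (Suc T)
  have "real (Suc T) * (\<delta> * F (Suc T)) \<le> real (Suc T) * (F T - F (Suc (Suc T)))"
    using Suc.prems[of "Suc T"] by (intro mult_left_mono) auto
  then show ?case
    using Suc by (simp add: algebra_simps)
qed simp

lemma weighted_sum_le_of_bounded:
  fixes F :: "nat \<Rightarrow> real"
  assumes "\<And>m. a \<le> m \<Longrightarrow> m \<le> L \<Longrightarrow> 0 \<le> F m \<and> F m \<le> c" and "0 \<le> c"
  shows "(\<Sum>m=a..L. real (m + 1) * F m) \<le> (real L + 1)^2 * c"
proof -
  have "(\<Sum>m=a..L. real (m + 1) * F m) \<le> (\<Sum>m=a..L. (real L + 1) * c)"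
    using assms(1) by (intro sum_mono mult_mono) auto
  also have "\<dots> = real (Suc L - a) * ((real L + 1) * c)" by simp
  also have "\<dots> \<le> (real L + 1) * ((real L + 1) * c)"
    using assms(2) by (intro mult_right_mono) auto
  finally show ?thesis by (simp add: power2_eq_square mult.assoc)
qed

lemma contraction_sum_le:
  fixes F :: "nat \<Rightarrow> real"
  assumes nonneg: "\<And>m. 0 \<le> F m" and "F 1 \<le> F 0"
    and contraction: "\<And>m. 1 \<le> m \<Longrightarrow> m \<le> T \<Longrightarrow> \<delta> * F m \<le> F (m - 1) - F (Suc m)"
    and \<delta>: "0 < \<delta>"
  shows "(\<Sum>m=1..T. F m) \<le> 2 * F 0 / \<delta>"
proof -
  have "\<delta> * (\<Sum>m=1..T. F m) \<le> F 0 + F 1 - F T - F (Suc T)"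
    by (rule telescoping_contraction_sum_le) (rule contraction)
  then have "\<delta> * (\<Sum>m=1..T. F m) \<le> 2 * F 0"
    using assms(2) nonneg[of T] nonneg[of "Suc T"] by linarith
  then show ?thesis using \<delta> by (simp add: field_simps)
qed

lemma contraction_weighted_sum_le:
  fixes F :: "nat \<Rightarrow> real"
  assumes nonneg: "\<And>m. 0 \<le> F m" and F1: "F 1 \<le> F 0"
    and contraction: "\<And>m. 1 \<le> m \<Longrightarrow> m \<le> T \<Longrightarrow> \<delta> * F m \<le> F (m - 1) - F (Suc m)"
    and \<delta>: "0 < \<delta>" "\<delta> \<le> 1" and T: "1 \<le> T"
  shows "(\<Sum>m=1..T. real m * F m) \<le> 6 * F 0 / \<delta>^2"
proof -
  define A where "A = (\<Sum>m=1..T. F m)"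
  have A_le: "A \<le> 2 * F 0 / \<delta>"
    unfolding A_def using contraction_sum_le[OF nonneg F1 contraction \<delta>(1)] by simp
  have "{..<T} \<subseteq> insert 0 {1..T}" by auto
  then have "(\<Sum>i<T. F i) \<le> F 0 + A"
    unfolding A_def using sum_mono2[of "insert 0 {1..T}" "{..<T}" F] nonneg by auto
  moreover have "0 \<le> (real T - 1) * F T" "0 \<le> real T * F (Suc T)"
    using T nonneg by auto
  moreover have "\<delta> * (\<Sum>m=1..T. real m * F m) \<le> 2 * (\<Sum>i<T. F i) - F 0 - (real T - 1) * F T - real T * F (Suc T)"
    by (rule telescoping_contraction_weighted_sum_le) (rule contraction)
  ultimately have "\<delta> * (\<Sum>m=1..T. real m * F m) \<le> 2 * (F 0 + A)"
    using nonneg[of 0] by (simp only: algebra_simps)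
  then have "(\<Sum>m=1..T. real m * F m) \<le> 2 * (F 0 + A) / \<delta>" using \<delta> by (simp add: field_simps)
  also have "\<dots> \<le> 2 * (F 0 + 2 * F 0 / \<delta>) / \<delta>" using A_le \<delta> by (simp add: divide_right_mono)
  also have "\<dots> = 2 * F 0 / \<delta> + 4 * F 0 / \<delta>^2" using \<delta> by (simp add: field_simps power2_eq_square)
  also have "\<dots> \<le> 6 * F 0 / \<delta>^2"
    using \<delta> nonneg[of 0] by (simp add: power2_eq_square divide_le_eq field_simps mult_left_le_one_le)
  finally show ?thesis .
qed

\<comment> \<open>Beyond \<open>T\<close> monotonicity bounds the tail by \<open>(4T)\<^sup>2 F\<^sub>T\<close>, which is controlled by
  \<open>\<Sum>\<^sub>m\<^sub>\<le>\<^sub>T m F\<^sub>m \<ge> F\<^sub>T T\<^sup>2/2\<close>.\<close>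
lemma weighted_sum_le_of_contraction_upto:
  fixes F :: "nat \<Rightarrow> real"
  assumes nonneg: "\<And>m. 0 \<le> F m"
    and antimono: "\<And>i m. i \<le> m \<Longrightarrow> m \<le> L \<Longrightarrow> F m \<le> F i"
    and contraction: "\<And>m. 1 \<le> m \<Longrightarrow> m \<le> T \<Longrightarrow> \<delta> * F m \<le> F (m - 1) - F (Suc m)"
    and \<delta>: "0 < \<delta>" "\<delta> \<le> 1" and T: "1 \<le> T" "T \<le> L" "L + 1 \<le> 4 * T"
  shows "(\<Sum>m\<le>L. real (m + 1) * F m) \<le> 201 * F 0 / \<delta>^2"
proof -
  define A where "A = (\<Sum>m=1..T. F m)"
  define B where "B = (\<Sum>m=1..T. real m * F m)"
  have F1: "F 1 \<le> F 0" using antimono[of 0 1] T by simp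
  have A_le: "A \<le> 2 * F 0 / \<delta>"
    unfolding A_def using contraction_sum_le[OF nonneg F1 contraction \<delta>(1)] by simp
  have B_le: "B \<le> 6 * F 0 / \<delta>^2"
    unfolding B_def using contraction_weighted_sum_le[OF nonneg F1 contraction \<delta> T(1)] by simp
  have "F T * (real T * (real T + 1) / 2) = F T * (\<Sum>m=1..T. real m)"
    using double_gauss_sum_from_Suc_0[of T, where 'a=real] by simp
  also have "\<dots> = (\<Sum>m=1..T. real m * F T)"
    by (simp add: sum_distrib_left mult.commute)
  also have "\<dots> \<le> B"
    unfolding B_def using antimono T by (intro sum_mono mult_left_mono) auto
  finally have FT_le: "F T * (real T * (real T + 1) / 2) \<le> B" .
  have "(\<Sum>m=Suc T..L. real (m + 1) * F m) \<le> (real L + 1)^2 * F T"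
    using antimono nonneg by (intro weighted_sum_le_of_bounded) auto
  also have "\<dots> \<le> (4 * real T)^2 * F T"
    using T nonneg[of T] by (intro mult_right_mono power_mono) auto
  also have "\<dots> \<le> 32 * B"
    using FT_le mult_nonneg_nonneg[OF of_nat_0_le_iff nonneg, of T T]
    by (simp add: power2_eq_square algebra_simps)
  finally have tail: "(\<Sum>m=Suc T..L. real (m + 1) * F m) \<le> 32 * B" .
  have "{..L} = insert 0 {1..T} \<union> {Suc T..L}" using T by auto
  then have "(\<Sum>m\<le>L. real (m + 1) * F m)
      = F 0 + (\<Sum>m=1..T. real m * F m + F m) + (\<Sum>m=Suc T..L. real (m + 1) * F m)"
    by (simp add: sum.union_disjoint algebra_simps)
  also have "\<dots> = F 0 + (A + B) + (\<Sum>m=Suc T..L. real (m + 1) * F m)"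
    unfolding A_def B_def by (simp add: sum.distrib)
  also have "\<dots> \<le> 201 * F 0 / \<delta>^2"
  proof -
    have "0 < \<delta>^2" "\<delta>^2 \<le> 1" using \<delta> by (auto simp: power_le_one)
    then have "F 0 \<le> F 0 / \<delta>^2" "2 * F 0 / \<delta> \<le> 2 * (F 0 / \<delta>^2)"
      using \<delta> nonneg[of 0] by (simp_all add: le_divide_eq mult_right_le_one_le)
        (simp add: power2_eq_square divide_le_eq field_simps mult_left_le_one_le)
    then show ?thesis using tail A_le B_le by simp
  qed
  finally show ?thesis .
qed

lemma weighted_sum_le_of_contraction:
  fixes F :: "nat \<Rightarrow> real"
  assumes nonneg: "\<And>m. 0 \<le> F m"
    and antimono: "\<And>i m. i \<le> m \<Longrightarrow> 2 * m \<le> N \<Longrightarrow> F m \<le> F i"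
    and contraction: "\<And>m. 1 \<le> m \<Longrightarrow> 4 * (m + 1) \<le> N \<Longrightarrow> \<delta> * F m \<le> F (m - 1) - F (Suc m)"
    and \<delta>: "0 < \<delta>" "\<delta> \<le> 1" and L: "2 * L \<le> N"
  shows "(\<Sum>m\<le>L. real (m + 1) * F m) \<le> 201 * F 0 / \<delta>^2"
proof (cases "N < 16")
  case True
  have "(\<Sum>m\<le>L. real (m + 1) * F m) \<le> (real L + 1)^2 * F 0"
    using weighted_sum_le_of_bounded[of 0 L F "F 0"] nonneg antimono[of 0] L
    by (simp add: atLeast0AtMost)
  also have "\<dots> \<le> 8^2 * F 0"
    using True L nonneg[of 0] by (intro mult_right_mono power_mono) auto
  also have "\<dots> \<le> 201 * F 0 / \<delta>^2"
  proof -
    have "64 * F 0 * \<delta>^2 \<le> 64 * F 0"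
      using \<delta> nonneg[of 0] by (intro mult_right_le_one_le) (auto simp: power_le_one)
    then show ?thesis using \<delta> nonneg[of 0] by (simp add: le_divide_eq)
  qed
  finally show ?thesis .
next
  case False
  define T where "T = N div 4 - 1"
  have T: "3 \<le> T" "4 * (T + 1) \<le> N" "N < 4 * (T + 2)" using False unfolding T_def by auto
  have contraction_T: "\<delta> * F m \<le> F (m - 1) - F (Suc m)" if "1 \<le> m" "m \<le> T" for m
    using contraction that T by auto
  show ?thesis
  proof (cases "T \<le> L")
    case True
    have "L + 1 \<le> 4 * T" using L T by presburger
    then show ?thesis
      using L T True nonneg \<delta> contraction_T
      by (intro weighted_sum_le_of_contraction_upto[where T=T]) (auto intro: antimono)
  next
    case False
    have "(\<Sum>m\<le>L. real (m + 1) * F m) \<le> (\<Sum>m\<le>T. real (m + 1) * F m)"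
      using False nonneg by (intro sum_mono2) auto
    also have "\<dots> \<le> 201 * F 0 / \<delta>^2"
      using T nonneg \<delta> contraction_T
      by (intro weighted_sum_le_of_contraction_upto[where T=T]) (auto intro: antimono)
    finally show ?thesis .
  qed
qed

definition energy :: "(nat \<Rightarrow> real) \<Rightarrow> real \<Rightarrow> nat \<Rightarrow> real" where
  "energy e \<mu> m = (e m)^2 + (e (Suc m))^2 - 2 * \<mu> * e m * e (Suc m)"

lemma energy_lower_bound:
  assumes "\<bar>\<mu>\<bar> \<le> 1"
  shows "(1 - \<bar>\<mu>\<bar>) * ((e m)^2 + (e (Suc m))^2) \<le> energy e \<mu> m"
proof -
  have "0 \<le> \<bar>\<mu>\<bar> * (\<bar>e m\<bar> - \<bar>e (Suc m)\<bar>)^2" by simp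
  moreover have "2 * \<mu> * e m * e (Suc m) \<le> 2 * \<bar>\<mu>\<bar> * \<bar>e m\<bar> * \<bar>e (Suc m)\<bar>"
    by (metis abs_ge_self abs_mult mult.assoc mult_left_mono zero_le_numeral)
  ultimately show ?thesis
    unfolding energy_def by (simp add: power2_eq_square algebra_simps)
qed

lemma energy_nonneg: "\<bar>\<mu>\<bar> \<le> 1 \<Longrightarrow> 0 \<le> energy e \<mu> m"
  using energy_lower_bound[of \<mu> e m] by (smt (verit) mult_nonneg_nonneg zero_le_power2)

lemma power2_le_of_mult_eq:
  fixes u d a b :: real
  assumes "a * d = b * u" "0 < a" "a \<le> b"
  shows "u^2 \<le> d^2"
proof -
  have "u^2 = (a / b)^2 * d^2"
    using assms by (simp add: field_simps power2_eq_square)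
  moreover have "(a / b)^2 \<le> 1" using assms by (simp add: power_le_one)
  ultimately show ?thesis by (simp add: mult_left_le_one_le)
qed

lemma energy_le_sum_squares:
  fixes a b \<mu> :: real
  assumes "\<bar>\<mu>\<bar> \<le> 1"
  shows "(1 - \<bar>\<mu>\<bar>) * (a^2 + b^2 - 2 * \<mu> * a * b) \<le> (b - \<mu> * a)^2 + (\<mu> * b - a)^2"
proof -
  define t where "t = \<bar>\<mu>\<bar>"
  have t: "0 \<le> t" "t^2 = \<mu>^2" unfolding t_def by simp_all
  have "\<mu> * (a * b) \<le> t * (\<bar>a\<bar> * \<bar>b\<bar>)"
    unfolding t_def by (metis abs_ge_self abs_mult)
  then have "(1 + t) * (\<mu> * (a * b)) \<le> (1 + t) * (t * (\<bar>a\<bar> * \<bar>b\<bar>))"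
    using t by (intro mult_left_mono) auto
  moreover have "0 \<le> t * (1 + t) * (\<bar>a\<bar> - \<bar>b\<bar>)^2" using t by simp
  moreover have "(b - \<mu> * a)^2 + (\<mu> * b - a)^2 - (1 - t) * (a^2 + b^2 - 2 * \<mu> * a * b)
      = t * (1 + t) * (\<bar>a\<bar> - \<bar>b\<bar>)^2 + (1 + t) * (2 * (t * (\<bar>a\<bar> * \<bar>b\<bar>))) - (1 + t) * (2 * (\<mu> * (a * b)))"
    using t by (simp add: power2_eq_square algebra_simps abs_mult_self_eq flip: abs_mult)
  ultimately show ?thesis unfolding t_def by linarith
qed

locale three_term_recurrence =
  fixes e :: "nat \<Rightarrow> real" and N :: nat and \<mu> :: real
  assumes recurrence: "\<And>m. 1 \<le> m \<Longrightarrow> m < N \<Longrightarrow>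
      (real N - real m) * e (Suc m) + real m * e (m - 1) = real N * \<mu> * e m"
    and abs_le_1: "\<bar>\<mu>\<bar> \<le> 1"
begin

lemma energy_step:
  assumes "1 \<le> m" "m < N"
  shows "energy e \<mu> (m - 1) - energy e \<mu> m = ((real N - 2 * real m) / real N) * (e (Suc m) - e (m - 1))^2"
proof -
  have "Suc (m - 1) = m" using assms by simp
  then have "energy e \<mu> (m - 1) - energy e \<mu> m = (e (m - 1) - e (Suc m)) * (e (m - 1) + e (Suc m) - 2 * \<mu> * e m)"
    unfolding energy_def by (simp add: power2_eq_square algebra_simps)
  also have "e (m - 1) + e (Suc m) - 2 * \<mu> * e m = ((real N - 2 * real m) / real N) * (e (m - 1) - e (Suc m))"
    using recurrence[OF assms] assms by (simp add: field_simps)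
  finally have "energy e \<mu> (m - 1) - energy e \<mu> m
      = ((real N - 2 * real m) / real N) * ((e (m - 1) - e (Suc m)) * (e (m - 1) - e (Suc m)))"
    by (simp add: mult.commute mult.left_commute)
  then show ?thesis by (simp add: power2_eq_square[symmetric] power2_commute)
qed

lemma energy_antimono:
  assumes "i \<le> m" "2 * m \<le> N"
  shows "energy e \<mu> m \<le> energy e \<mu> i"
  using assms
proof (induction m)
  case (Suc m)
  have "energy e \<mu> m - energy e \<mu> (Suc m) = ((real N - 2 * real (Suc m)) / real N) * (e (Suc (Suc m)) - e m)^2"
    using energy_step[of "Suc m"] Suc.prems by auto
  moreover have "0 \<le> ((real N - 2 * real (Suc m)) / real N) * (e (Suc (Suc m)) - e m)^2"
    using Suc.prems by (intro mult_nonneg_nonneg) auto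
  ultimately have "energy e \<mu> (Suc m) \<le> energy e \<mu> m" by linarith
  then show ?case
    using Suc by (cases "i = Suc m") auto
qed simp

\<comment> \<open>The energy drop over two steps dominates \<open>u\<^sup>2 + w\<^sup>2\<close> for \<open>u = e\<^sub>m\<^sub>+\<^sub>1 - \<mu> e\<^sub>m\<close>,
  \<open>w = \<mu> e\<^sub>m\<^sub>+\<^sub>1 - e\<^sub>m\<close>, because the recurrence expresses \<open>u\<close> and \<open>w\<close> as shrunken second differences.\<close>
lemma energy_contraction:
  assumes m: "1 \<le> m" "4 * (m + 1) \<le> N"
  shows "(1 - \<bar>\<mu>\<bar>) / 2 * energy e \<mu> m \<le> energy e \<mu> (m - 1) - energy e \<mu> (Suc m)"
proof -
  define d1 where "d1 = e (Suc m) - e (m - 1)"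
  define d2 where "d2 = e (Suc (Suc m)) - e m"
  define u where "u = e (Suc m) - \<mu> * e m"
  define w where "w = \<mu> * e (Suc m) - e m"
  have "real (4 * (m + 1)) \<le> real N" using m(2) by (simp only: of_nat_le_iff)
  then have N: "4 * real m + 4 \<le> real N" by simp
  have "1 / 2 \<le> (real N - 2 * real m) / real N" "1 / 2 \<le> (real N - 2 * real (Suc m)) / real N"
    using N by (simp_all add: le_divide_eq)
  then have "(1 / 2) * d1^2 \<le> ((real N - 2 * real m) / real N) * d1^2"
    "(1 / 2) * d2^2 \<le> ((real N - 2 * real (Suc m)) / real N) * d2^2"
    by (intro mult_right_mono; simp)+
  moreover have "energy e \<mu> (m - 1) - energy e \<mu> m = ((real N - 2 * real m) / real N) * d1^2"
    using energy_step[of m] m unfolding d1_def by simp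
  moreover have "energy e \<mu> m - energy e \<mu> (Suc m) = ((real N - 2 * real (Suc m)) / real N) * d2^2"
    using energy_step[of "Suc m"] m unfolding d2_def by simp
  moreover have "u^2 \<le> d1^2"
  proof (rule power2_le_of_mult_eq)
    show "real m * d1 = real N * u"
      unfolding d1_def u_def using recurrence[of m] m by (simp add: algebra_simps)
  qed (use m in auto)
  moreover have "w^2 \<le> d2^2"
  proof (rule power2_le_of_mult_eq)
    show "(real N - real (Suc m)) * d2 = real N * w"
      unfolding d2_def w_def using recurrence[of "Suc m"] m by (simp add: algebra_simps)
  qed (use N in auto)
  moreover have "(1 - \<bar>\<mu>\<bar>) * energy e \<mu> m \<le> u^2 + w^2"
    using energy_le_sum_squares[OF abs_le_1, of "e m" "e (Suc m)"] unfolding energy_def u_def w_def by simp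
  ultimately show ?thesis by linarith
qed

lemma square_le_energy: "(1 - \<bar>\<mu>\<bar>) * (e m)^2 \<le> energy e \<mu> m"
proof -
  have "(1 - \<bar>\<mu>\<bar>) * (e m)^2 \<le> (1 - \<bar>\<mu>\<bar>) * ((e m)^2 + (e (Suc m))^2)"
    using abs_le_1 by (intro mult_left_mono) auto
  then show ?thesis using energy_lower_bound[OF abs_le_1, of e m] by linarith
qed

lemma energy_0: "e 1 = \<mu> * e 0 \<Longrightarrow> energy e \<mu> 0 = (1 - \<mu>^2) * (e 0)^2"
  unfolding energy_def by (simp add: power2_eq_square algebra_simps)

lemma weighted_sum_square_le:
  assumes \<mu>: "\<bar>\<mu>\<bar> < 1" and L: "2 * L \<le> N" and init: "e 1 = \<mu> * e 0"
  shows "(\<Sum>m\<le>L. real (m + 1) * (e m)^2) \<le> 1608 * (e 0)^2 / (1 - \<bar>\<mu>\<bar>)^2"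
proof -
  define t where "t = 1 - \<bar>\<mu>\<bar>"
  have t: "0 < t" "t \<le> 1" using \<mu> unfolding t_def by auto
  have "(e m)^2 \<le> energy e \<mu> m / t" for m
    using square_le_energy[of m] t unfolding t_def by (simp add: le_divide_eq mult.commute)
  then have "(\<Sum>m\<le>L. real (m + 1) * (e m)^2) \<le> (\<Sum>m\<le>L. real (m + 1) * (energy e \<mu> m / t))"
    by (intro sum_mono mult_left_mono) auto
  also have "\<dots> = (\<Sum>m\<le>L. real (m + 1) * energy e \<mu> m) / t"
    by (simp add: sum_divide_distrib)
  also have "(\<Sum>m\<le>L. real (m + 1) * energy e \<mu> m) \<le> 201 * energy e \<mu> 0 / (t / 2)^2"
  proof (rule weighted_sum_le_of_contraction[where N=N])
    show "t / 2 * energy e \<mu> m \<le> energy e \<mu> (m - 1) - energy e \<mu> (Suc m)"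
      if "1 \<le> m" "4 * (m + 1) \<le> N" for m
      using energy_contraction[OF that] unfolding t_def by simp
  qed (use energy_nonneg[OF abs_le_1] t L in \<open>simp_all add: energy_antimono\<close>)
  then have "(\<Sum>m\<le>L. real (m + 1) * energy e \<mu> m) / t \<le> (201 * energy e \<mu> 0 / (t / 2)^2) / t"
    using t by (intro divide_right_mono) auto
  also have "energy e \<mu> 0 = t * (2 - t) * (e 0)^2"
  proof -
    have "\<mu>^2 = \<bar>\<mu>\<bar>^2" by simp
    then show ?thesis unfolding energy_0[OF init] t_def by (simp only: power2_eq_square algebra_simps)
  qed
  also have "(201 * (t * (2 - t) * (e 0)^2) / (t / 2)^2) / t = 804 * (2 - t) * (e 0)^2 / t^2"
    using t by (simp add: field_simps power2_eq_square)
  also have "\<dots> \<le> 1608 * (e 0)^2 / t^2"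
    using t mult_right_mono[of "804 * (2 - t)" 1608 "(e 0)^2"] by (intro divide_right_mono) auto
  finally show ?thesis unfolding t_def .
qed

lemma weighted_sum_square_le_of_abs_eq_1:
  assumes \<mu>: "\<bar>\<mu>\<bar> = 1" and L: "2 * L \<le> N" and init: "e 1 = \<mu> * e 0"
  shows "(\<Sum>m\<le>L. real (m + 1) * (e m)^2) \<le> (real L + 1)^2 * (e 0)^2"
proof -
  have \<mu>2: "\<mu>^2 = 1" using \<mu> abs_mult_self_eq[of \<mu>] by (simp add: power2_eq_square)
  have sq_eq: "(e m)^2 = (e 0)^2" if "m \<le> L" for m
    using that
  proof (induction m)
    case (Suc m)
    have "energy e \<mu> 0 = 0" using energy_0[OF init] \<mu>2 by simp
    moreover have "energy e \<mu> m \<le> energy e \<mu> 0" using Suc.prems L by (intro energy_antimono) auto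
    ultimately have "energy e \<mu> m = 0" using energy_nonneg[OF abs_le_1, of e m] by linarith
    moreover have "energy e \<mu> m = (e (Suc m) - \<mu> * e m)^2 + (1 - \<mu>^2) * (e m)^2"
      unfolding energy_def by (simp add: power2_eq_square algebra_simps)
    ultimately have "e (Suc m) = \<mu> * e m" using \<mu>2 by simp
    then have "(e (Suc m))^2 = \<mu>^2 * (e m)^2" by (simp add: power_mult_distrib)
    with Suc.IH Suc.prems \<mu>2 show ?case by simp
  qed simp
  have "(\<Sum>m=0..L. real (m + 1) * (e m)^2) \<le> (real L + 1)^2 * (e 0)^2"
  proof (rule weighted_sum_le_of_bounded)
    show "0 \<le> (e m)^2 \<and> (e m)^2 \<le> (e 0)^2" if "0 \<le> m" "m \<le> L" for m
      using sq_eq[OF \<open>m \<le> L\<close>] by simp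
  qed simp
  then show ?thesis by (simp add: atLeast0AtMost)
qed

end

section \<open>Second differences of the eigenvalues\<close>

lemma second_difference_recurrence:
  fixes \<kappa> :: "nat \<Rightarrow> real"
  assumes rec: "\<And>k. 1 \<le> k \<Longrightarrow> k < n \<Longrightarrow> (real n - real k) * \<kappa> (Suc k) + real k * \<kappa> (k - 1) = s * \<kappa> k"
    and m: "1 \<le> m" "m + 2 < n"
  shows "(real (n - 2) - real m) * (\<kappa> (m + 3) - \<kappa> (m + 1)) + real m * (\<kappa> (m + 1) - \<kappa> (m - 1))
    = s * (\<kappa> (m + 2) - \<kappa> m)"
proof -
  have "(real n - real m) * \<kappa> (m + 1) + real m * \<kappa> (m - 1) = s * \<kappa> m"
    "(real n - (real m + 1)) * \<kappa> (m + 2) + (real m + 1) * \<kappa> m = s * \<kappa> (m + 1)"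
    "(real n - (real m + 2)) * \<kappa> (m + 3) + (real m + 2) * \<kappa> (m + 1) = s * \<kappa> (m + 2)"
    using rec[of m] rec[of "m + 1"] rec[of "m + 2"] m by (simp_all add: add.commute eval_nat_numeral)
  then have "real n * ((real n - 2 - real m) * (\<kappa> (m + 3) - \<kappa> (m + 1)) + real m * (\<kappa> (m + 1) - \<kappa> (m - 1))
      - s * (\<kappa> (m + 2) - \<kappa> m)) = 0"
    by algebra
  then show ?thesis using m by (simp add: of_nat_diff)
qed

lemma second_difference_initial:
  fixes \<kappa> :: "nat \<Rightarrow> real"
  assumes rec: "\<And>k. 1 \<le> k \<Longrightarrow> k < n \<Longrightarrow> (real n - real k) * \<kappa> (Suc k) + real k * \<kappa> (k - 1) = s * \<kappa> k"
    and \<kappa>: "\<kappa> 0 = 1" "\<kappa> 1 = s / real n" and n: "3 < n"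
  shows "(real n - 2) * (\<kappa> 3 - \<kappa> 1) = s * (\<kappa> 2 - \<kappa> 0)"
    and "\<kappa> 2 - \<kappa> 0 = (s^2 - (real n)^2) / (real n * (real n - 1))"
proof -
  have r: "(real n - 1) * \<kappa> 2 + \<kappa> 0 = s * \<kappa> 1" "(real n - 2) * \<kappa> 3 + 2 * \<kappa> 1 = s * \<kappa> 2"
    using rec[of 1] rec[of 2] n by (simp_all add: numeral_2_eq_2 numeral_3_eq_3)
  have "real n * \<kappa> 1 = s" using \<kappa> n by simp
  then show "(real n - 2) * (\<kappa> 3 - \<kappa> 1) = s * (\<kappa> 2 - \<kappa> 0)"
    using r(2) \<kappa>(1) by (simp add: algebra_simps; linarith)
  have "(real n - 1) * \<kappa> 2 = s * s / real n - 1" using r(1) \<kappa> by simp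
  then have "\<kappa> 2 = (s * s / real n - 1) / (real n - 1)"
    using n by (simp add: field_simps)
  then show "\<kappa> 2 - \<kappa> 0 = (s^2 - (real n)^2) / (real n * (real n - 1))"
    using n \<kappa>(1) by (simp add: field_simps power2_eq_square)
qed

lemma recurrence_vanishes:
  fixes e :: "nat \<Rightarrow> real"
  assumes rec: "\<And>m. 1 \<le> m \<Longrightarrow> m < N \<Longrightarrow> (real N - real m) * e (Suc m) + real m * e (m - 1) = c * e m"
    and "e 0 = 0" "e 1 = 0"
  shows "m < N \<Longrightarrow> e m = 0 \<and> e (Suc m) = 0"
proof (induction m)
  case (Suc m)
  then have "e m = 0" "e (Suc m) = 0" by auto
  moreover have "(real N - real (Suc m)) * e (Suc (Suc m)) + real (Suc m) * e m = c * e (Suc m)"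
    using rec[of "Suc m"] Suc.prems by simp
  ultimately show ?case using Suc.prems by simp
qed (use assms in simp)

lemma square_four_mult_div_le:
  fixes n a :: real
  assumes a: "2 \<le> a" "2 * a \<le> n"
  shows "(4 * a * (n - a) / (n * (n - 1)))^2 \<le> 16 * ((2 * a - 2) / (n - 2))^2"
proof -
  have n: "n \<ge> 4" "n - 2 > 0" "n * (n - 1) > 0" using a by auto
  have "a * (n - a) * (n - 2) \<le> (a * n) * (n - 1)"
    using a n by (intro mult_mono) (auto simp: algebra_simps)
  also have "\<dots> \<le> ((2 * a - 2) * n) * (n - 1)" using a n by (intro mult_right_mono) auto
  finally have "(4 * a * (n - a)) * (n - 2) \<le> (4 * (2 * a - 2)) * (n * (n - 1))"
    by (simp add: algebra_simps)
  then have "4 * a * (n - a) / (n * (n - 1)) * (n - 2) \<le> 4 * (2 * a - 2)"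
    using n by (simp add: divide_le_eq)
  then have "4 * a * (n - a) / (n * (n - 1)) \<le> 4 * (2 * a - 2) / (n - 2)"
    using n by (simp add: le_divide_eq)
  then have "(4 * a * (n - a) / (n * (n - 1)))^2 \<le> (4 * (2 * a - 2) / (n - 2))^2"
    using a n by (intro power_mono) auto
  then show ?thesis by (simp add: power2_eq_square power_divide algebra_simps)
qed

lemma square_initial_difference_le:
  fixes n j :: nat
  assumes "2 \<le> j" "j + 2 \<le> n"
  shows "(((real n - 2 * real j)^2 - (real n)^2) / (real n * (real n - 1)))^2
    \<le> 16 * (1 - \<bar>(real n - 2 * real j) / (real n - 2)\<bar>)^2"
proof -
  \<comment> \<open>the left side is symmetric under \<open>j \<mapsto> n - j\<close>, so let \<open>a\<close> be the smaller of the two\<close>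
  define a where "a = min (real j) (real n - real j)"
  have "real (j + 2) \<le> real n" "2 \<le> real j" using assms by (simp_all only: of_nat_le_iff)
  then have a: "2 \<le> a" "2 * a \<le> real n" unfolding a_def by (auto simp: min_def)
  have "((real n - 2 * real j)^2 - (real n)^2)^2 = (4 * a * (real n - a))^2"
    unfolding a_def by (simp add: min_def power2_eq_square algebra_simps)
  moreover have "1 - \<bar>(real n - 2 * real j) / (real n - 2)\<bar> = (2 * a - 2) / (real n - 2)"
    using a unfolding a_def by (auto simp: min_def field_simps abs_if)
  ultimately show ?thesis
    using square_four_mult_div_le[OF a] by (simp add: power_divide)
qed

lemma weighted_sum_square_le_of_second_difference:
  fixes e :: "nat \<Rightarrow> real" and n j L :: nat
  defines "s \<equiv> real n - 2 * real j"
  assumes rec: "\<And>m. 1 \<le> m \<Longrightarrow> m < n - 2 \<Longrightarrow>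
      (real (n - 2) - real m) * e (Suc m) + real m * e (m - 1) = s * e m"
    and e0: "e 0 = (s^2 - (real n)^2) / (real n * (real n - 1))"
    and e1: "(real n - 2) * e 1 = s * e 0"
    and j: "j \<le> n" and L: "2 * L + 4 \<le> n"
  shows "(\<Sum>m\<le>L. real (m + 1) * (e m)^2) \<le> 25728"
proof -
  define \<mu> where "\<mu> = s / (real n - 2)"
  have n: "real n - 2 > 0" "real (n - 2) * \<mu> = s" using L unfolding \<mu>_def by (auto simp: of_nat_diff)
  have L': "2 * L \<le> n - 2" using L by simp
  have init: "e 1 = \<mu> * e 0" using e1 n unfolding \<mu>_def by (simp add: field_simps)
  have rec_\<mu>: "(real (n - 2) - real m) * e (Suc m) + real m * e (m - 1) = real (n - 2) * \<mu> * e m"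
    if "1 \<le> m" "m < n - 2" for m
    using rec[OF that] n by simp
  consider "j = 0 \<or> j = n" | "j = 1 \<or> j = n - 1" | "2 \<le> j" "j + 2 \<le> n" using j by linarith
  then show ?thesis
  proof cases
    case 1
    then have "e 0 = 0" "e 1 = 0" using e0 init unfolding s_def by (auto simp: power2_eq_square)
    then have "e m = 0" if "m \<le> L" for m
      using recurrence_vanishes[OF rec, of m] that L by simp
    then show ?thesis by simp
  next
    case 2
    then have "\<bar>s\<bar> = real n - 2" "s^2 - (real n)^2 = - 4 * (real n - 1)"
      using L unfolding s_def by (auto simp: power2_eq_square algebra_simps of_nat_diff)
    then have \<mu>: "\<bar>\<mu>\<bar> = 1" and "e 0 = - 4 * (real n - 1) / (real n * (real n - 1))"
      using n e0 unfolding \<mu>_def by (auto simp: abs_divide)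
    then have "e 0 = - 4 / real n"
      using n nonzero_mult_divide_mult_cancel_right[of "real n - 1" "- 4" "real n"] by simp
    interpret three_term_recurrence e "n - 2" \<mu>
      using rec_\<mu> \<mu> by unfold_locales auto
    have "(\<Sum>m\<le>L. real (m + 1) * (e m)^2) \<le> (real L + 1)^2 * (4 / real n)^2"
      using weighted_sum_square_le_of_abs_eq_1[OF \<mu> L' init] \<open>e 0 = - 4 / real n\<close> by simp
    also have "\<dots> \<le> (real n / 2)^2 * (4 / real n)^2"
      using L by (intro mult_right_mono power_mono) auto
    also have "\<dots> \<le> 25728" using n by (simp add: power_divide)
    finally show ?thesis .
  next
    case 3
    then have "\<bar>s\<bar> < real n - 2" unfolding s_def by (simp add: abs_less_iff)
    then have \<mu>: "\<bar>\<mu>\<bar> < 1" using n unfolding \<mu>_def by (simp add: abs_divide divide_less_eq)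
    interpret three_term_recurrence e "n - 2" \<mu>
      using rec_\<mu> \<mu> by unfold_locales auto
    have "(\<Sum>m\<le>L. real (m + 1) * (e m)^2) \<le> 1608 * (e 0)^2 / (1 - \<bar>\<mu>\<bar>)^2"
      by (rule weighted_sum_square_le[OF \<mu> L' init])
    also have "\<dots> \<le> 1608 * (16 * (1 - \<bar>\<mu>\<bar>)^2) / (1 - \<bar>\<mu>\<bar>)^2"
      using square_initial_difference_le[OF 3] unfolding e0 \<mu>_def s_def
      by (intro divide_right_mono) auto
    also have "\<dots> = 25728" using \<mu> by simp
    finally show ?thesis .
  qed
qed

lemma sph_eigenvalue_second_difference_sum_le:
  assumes T: "T \<in> cube n" and L: "2 * L + 2 \<le> n"
  shows "(\<Sum>m=1..L. real m * (sph_eigenvalue n T (Suc m) - sph_eigenvalue n T (m - 1))^2) \<le> 25728"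
proof (cases L)
  case (Suc L')
  define \<kappa> where "\<kappa> = sph_eigenvalue n T"
  define s where "s = real n - 2 * real (card T)"
  have TU: "T \<subseteq> {..<n}" using T by (simp add: cube_def)
  have n: "3 < n" using L Suc by simp
  have rec: "(real n - real k) * \<kappa> (Suc k) + real k * \<kappa> (k - 1) = s * \<kappa> k" if "1 \<le> k" "k < n" for k
    using sph_eigenvalue_recurrence[OF TU that] unfolding \<kappa>_def s_def .
  have \<kappa>: "\<kappa> 0 = 1" "\<kappa> 1 = s / real n"
    unfolding \<kappa>_def s_def using sph_eigenvalue_0 sph_eigenvalue_1[OF TU] by simp_all
  note init = second_difference_initial[OF rec \<kappa> n]
  have "(\<Sum>m=1..L. real m * (\<kappa> (Suc m) - \<kappa> (m - 1))^2) = (\<Sum>m\<le>L'. real (m + 1) * (\<kappa> (m + 2) - \<kappa> m)^2)"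
    unfolding One_nat_def sum.atLeast1_atMost_eq Suc lessThan_Suc_atMost by (simp add: add.commute)
  also have "\<dots> \<le> 25728"
  proof (rule weighted_sum_square_le_of_second_difference[where j="card T" and e="\<lambda>m. \<kappa> (m + 2) - \<kappa> m"])
    show "(real (n - 2) - real m) * (\<kappa> (Suc m + 2) - \<kappa> (Suc m)) + real m * (\<kappa> (m - 1 + 2) - \<kappa> (m - 1))
        = (real n - 2 * real (card T)) * (\<kappa> (m + 2) - \<kappa> m)" if "1 \<le> m" "m < n - 2" for m
      using second_difference_recurrence[OF rec, of m] that unfolding s_def
      by (simp add: numeral_3_eq_3 numeral_2_eq_2)
    show "card T \<le> n" using card_mono[OF _ TU] by simp
    show "\<kappa> (0 + 2) - \<kappa> 0 = ((real n - 2 * real (card T))^2 - (real n)^2) / (real n * (real n - 1))"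
      using init(2) unfolding s_def by (simp add: numeral_2_eq_2)
    show "(real n - 2) * (\<kappa> (1 + 2) - \<kappa> 1) = (real n - 2 * real (card T)) * (\<kappa> (0 + 2) - \<kappa> 0)"
      using init(1) unfolding s_def by (simp add: numeral_2_eq_2 numeral_3_eq_3)
  qed (use L Suc in simp)
  finally show ?thesis unfolding \<kappa>_def .
qed simp

lemma weighted_sum_reindex_le:
  fixes g :: "nat \<Rightarrow> real"
  assumes "\<And>m. 0 \<le> g m" "inj_on h {1..r}" "\<And>k. k \<in> {1..r} \<Longrightarrow> k \<le> h k \<and> h k \<in> {1..M}"
  shows "(\<Sum>k=1..r. real k * g (h k)) \<le> (\<Sum>m=1..M. real m * g m)"
proof -
  have "(\<Sum>k=1..r. real k * g (h k)) \<le> (\<Sum>k=1..r. real (h k) * g (h k))"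
    using assms by (intro sum_mono mult_right_mono) auto
  also have "\<dots> = (\<Sum>m\<in>h ` {1..r}. real m * g m)"
    using sum.reindex[OF assms(2), of "\<lambda>m. real m * g m"] by simp
  also have "\<dots> \<le> (\<Sum>m=1..M. real m * g m)"
    using assms by (intro sum_mono2) auto
  finally show ?thesis .
qed

lemma l2norm_square_function_le:
  fixes p q :: "nat \<Rightarrow> nat" and K :: "nat set" and C :: real
  assumes K: "finite K" and C: "0 \<le> C"
    and eigen: "\<And>T. T \<in> cube n \<Longrightarrow>
      (\<Sum>k\<in>K. real k * (sph_eigenvalue n T (p k) - sph_eigenvalue n T (q k))^2) \<le> 2 * C^2"
  shows "l2norm n (\<lambda>x. sqrt ((1/2) * (\<Sum>k\<in>K. real k * (sph_mean n (p k) f x - sph_mean n (q k) f x)^2)))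
    \<le> C * l2norm n f"
proof -
  let ?D = "\<lambda>x k. (sph_mean n (p k) f x - sph_mean n (q k) f x)^2"
  let ?d = "\<lambda>T k. (sph_eigenvalue n T (p k) - sph_eigenvalue n T (q k))^2"
  let ?c = "walsh_coeff n f"
  have "(\<Sum>x\<in>cube n. (sqrt ((1/2) * (\<Sum>k\<in>K. real k * ?D x k)))^2) = (\<Sum>x\<in>cube n. (1/2) * (\<Sum>k\<in>K. real k * ?D x k))"
    by (intro sum.cong refl real_sqrt_pow2) (simp add: sum_nonneg)
  also have "\<dots> = (1/2) * (\<Sum>x\<in>cube n. \<Sum>k\<in>K. real k * ?D x k)"
    by (simp add: sum_distrib_left)
  also have "\<dots> = (1/2) * (\<Sum>k\<in>K. \<Sum>x\<in>cube n. real k * ?D x k)"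
    by (simp only: sum.swap[of "\<lambda>x k. real k * ?D x k" K "cube n"])
  also have "\<dots> = (1/2) * (\<Sum>k\<in>K. real k * (\<Sum>x\<in>cube n. ?D x k))"
    by (simp add: sum_distrib_left)
  also have "\<dots> = (1/2) * (\<Sum>k\<in>K. \<Sum>T\<in>cube n. 2 ^ n * ((?c T)^2 * (real k * ?d T k)))"
    unfolding sum_square_sph_mean_diff by (simp add: sum_distrib_left mult_ac)
  also have "\<dots> = (1/2) * (\<Sum>T\<in>cube n. \<Sum>k\<in>K. 2 ^ n * ((?c T)^2 * (real k * ?d T k)))"
    by (simp only: sum.swap[of "\<lambda>k T. 2 ^ n * ((?c T)^2 * (real k * ?d T k))" "cube n" K])
  also have "\<dots> = (1/2) * 2 ^ n * (\<Sum>T\<in>cube n. (?c T)^2 * (\<Sum>k\<in>K. real k * ?d T k))"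
    by (simp add: sum_distrib_left mult_ac)
  also have "\<dots> \<le> (1/2) * 2 ^ n * (\<Sum>T\<in>cube n. (?c T)^2 * (2 * C^2))"
    using eigen by (intro mult_left_mono sum_mono) auto
  also have "\<dots> = C^2 * (\<Sum>x\<in>cube n. (f x)^2)"
    unfolding sum_square_eq_walsh_coeff[of f] by (simp add: sum_distrib_left sum_distrib_right mult_ac)
  finally have "sqrt (\<Sum>x\<in>cube n. (sqrt ((1/2) * (\<Sum>k\<in>K. real k * ?D x k)))^2)
      \<le> sqrt (C^2 * (\<Sum>x\<in>cube n. (f x)^2))"
    by (rule real_sqrt_le_mono)
  then show ?thesis
    unfolding l2norm_def using C by (simp add: real_sqrt_mult)
qed

lemma sph_eigenvalue_even_difference_sum_le:
  assumes T: "T \<in> cube n"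
  shows "(\<Sum>k=1..(n div 2) div 2. real k * (sph_eigenvalue n T (2 * k) - sph_eigenvalue n T (2 * (k - 1)))^2)
    \<le> 25728"
proof -
  define r where "r = (n div 2) div 2"
  let ?g = "\<lambda>m. (sph_eigenvalue n T (Suc m) - sph_eigenvalue n T (m - 1))^2"
  have "(\<Sum>k=1..r. real k * (sph_eigenvalue n T (2 * k) - sph_eigenvalue n T (2 * (k - 1)))^2)
      = (\<Sum>k=1..r. real k * ?g (2 * k - 1))"
    by (intro sum.cong refl) (auto simp: Suc_diff_1 numeral_2_eq_2)
  also have "\<dots> \<le> (\<Sum>m=1..2 * r - 1. real m * ?g m)"
    by (rule weighted_sum_reindex_le) (auto simp: inj_on_def)
  also have "\<dots> \<le> 25728"
  proof (cases "r = 0")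
    case False
    then show ?thesis
      by (intro sph_eigenvalue_second_difference_sum_le[OF T]) (simp add: r_def; linarith)
  qed simp
  finally show ?thesis unfolding r_def .
qed

lemma sph_eigenvalue_odd_difference_sum_le:
  assumes T: "T \<in> cube n"
  shows "(\<Sum>k=1..(n div 2 - 1) div 2. real k * (sph_eigenvalue n T (2 * k + 1) - sph_eigenvalue n T (2 * k - 1))^2)
    \<le> 25728"
proof -
  define r where "r = (n div 2 - 1) div 2"
  let ?g = "\<lambda>m. (sph_eigenvalue n T (Suc m) - sph_eigenvalue n T (m - 1))^2"
  have "(\<Sum>k=1..r. real k * (sph_eigenvalue n T (2 * k + 1) - sph_eigenvalue n T (2 * k - 1))^2)
      = (\<Sum>k=1..r. real k * ?g (2 * k))"
    by simp
  also have "\<dots> \<le> (\<Sum>m=1..2 * r. real m * ?g m)"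
    by (rule weighted_sum_reindex_le) (auto simp: inj_on_def)
  also have "\<dots> \<le> 25728"
  proof (cases "r = 0")
    case False
    then show ?thesis
      by (intro sph_eigenvalue_second_difference_sum_le[OF T]) (simp add: r_def; presburger)
  qed simp
  finally show ?thesis unfolding r_def .
qed

theorem lemma3:
  shows "\<exists>C::real. \<forall>n\<ge>1. \<forall>f :: nat set \<Rightarrow> real.
           l2norm n (R0 n f) \<le> C * l2norm n f \<and> l2norm n (R1 n f) \<le> C * l2norm n f"
proof (intro exI[of _ 200] allI impI conjI)
  fix n :: nat and f :: "nat set \<Rightarrow> real"
  show "l2norm n (R0 n f) \<le> 200 * l2norm n f"
    unfolding R0_def
  proof (rule l2norm_square_function_le[where p="\<lambda>k. 2 * k" and q="\<lambda>k. 2 * (k - 1)"])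
    show "(\<Sum>k=1..(n div 2) div 2. real k * (sph_eigenvalue n T (2 * k) - sph_eigenvalue n T (2 * (k - 1)))^2)
        \<le> 2 * 200^2" if "T \<in> cube n" for T
      using sph_eigenvalue_even_difference_sum_le[OF that] by simp
  qed simp_all
  show "l2norm n (R1 n f) \<le> 200 * l2norm n f"
    unfolding R1_def
  proof (rule l2norm_square_function_le[where p="\<lambda>k. 2 * k + 1" and q="\<lambda>k. 2 * k - 1"])
    show "(\<Sum>k=1..(n div 2 - 1) div 2. real k * (sph_eigenvalue n T (2 * k + 1) - sph_eigenvalue n T (2 * k - 1))^2)
        \<le> 2 * 200^2" if "T \<in> cube n" for T
      using sph_eigenvalue_odd_difference_sum_le[OF that] by simp
  qed simp_all
qed

end
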